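(* Let $(A,S)$ be a QP and $I\subseteq Q_0$ a subset of vertices. Then the homomorphism $\psi_I$ induces an epimorphism of Jacobian algebras $\mathcal P(A,S)\to\mathcal P(A|_I,S|_I)$ and an epimorphism of deformation spaces $\mathrm{Def}(A,S)\to\mathrm{Def}(A|_I,S|_I)$. Consequently, if $\mathcal P(A,S)$ is finite-dimensional, or if $(A,S)$ is rigid, then the same is true for $(A|_I,S|_I)$.
   Context: Fix a field $K$; quiver $Q$ with vertices $Q_0$; $R=K^{Q_0}$; arrow span $A$, $A_{i,j}=e_iAe_j$ spanned by arrows $j\to i$. Complete path algebra $R\langle\langle A\rangle\rangle=\prod_dA^d$ with $\mathfrak m$-adic topology. Potentials; cyclic equivalence (difference in the closure of the span of $a_1\cdots a_d-a_2\cdots a_da_1$); $\partial_a(a_1\cdots a_d)=\sum_{p:a_p=a}a_{p+1}\cdots a_da_1\cdots a_{p-1}$; $J(S)$ closure of the ideal generated by all $\partial_aS$; $\mathcal P(A,S)=R\langle\langle A\rangle\rangle/J(S)$. QP: no loops, no two cyclically equivalent cyclic paths in $S$. $\mathrm{Tr}(U)=U/\{U,U\}$ ($\{U,U\}$ closure of span of commutators); $\mathrm{Def}(A,S)=\mathrm{Tr}(\mathcal P(A,S))/R$; $(A,S)$ rigid if $\mathrm{Def}(A,S)=0$. Restriction: $A|_I=\bigoplus_{i,j\in I}A_{i,j}$ (over vertex set $I$, with $R_I=K^I$), $\psi_I:R\langle\langle A\rangle\rangle\to R\langle\langle A|_I\rangle\rangle$ the algebra homomorphism fixing arrows of $A|_I$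 and sending all other arrows (and $e_i$, $i\notin I$) to $0$, and $S|_I=\psi_I(S)$. *)

theory Defs
  imports Main
begin

text \<open>A quiver: vertex set Q0, arrow set Q1, and for each arrow a its head
  (target) and tail (source); an arrow a from j to i lies in A_{i,j} = e_i A e_j.\<close>

record ('v, 'e) quiver =
  verts :: "'v set"
  arrs  :: "'e set"
  hd_of :: "'e \<Rightarrow> 'v"
  tl_of :: "'e \<Rightarrow> 'v"

definition wf_quiver :: "('v, 'e) quiver \<Rightarrow> bool" where
  "wf_quiver Q \<longleftrightarrow> finite (verts Q) \<and> finite (arrs Q) \<and>
     (\<forall>a\<in>arrs Q. hd_of Q a \<in> verts Q \<and> tl_of Q a \<in> verts Q)"

definition no_loops :: "('v, 'e) quiver \<Rightarrow> bool" where
  "no_loops Q \<longleftrightarrow> (\<forall>a\<in>arrs Q. hd_of Q a \<noteq> tl_of Q a)"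

text \<open>Paths. A path is a pair (v, [a_1,...,a_d]) representing the product
  a_1 a_2 ... a_d (with tl a_p = hd a_(p+1)); v is its head vertex.
  The pair (v, []) is the trivial path e_v.\<close>

type_synonym ('v, 'e) path = "'v \<times> 'e list"

fun composable :: "('v, 'e) quiver \<Rightarrow> 'e list \<Rightarrow> bool" where
  "composable Q [] = True"
| "composable Q [a] = (a \<in> arrs Q)"
| "composable Q (a # b # xs) = (a \<in> arrs Q \<and> tl_of Q a = hd_of Q b \<and> composable Q (b # xs))"

definition valid_path :: "('v, 'e) quiver \<Rightarrow> ('v, 'e) path \<Rightarrow> bool" where
  "valid_path Q p = (case p of
       (v, []) \<Rightarrow> v \<in> verts Q
     | (v, a # xs) \<Rightarrow> v = hd_of Q a \<and> composable Q (a # xs))"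

definition ptail :: "('v, 'e) quiver \<Rightarrow> ('v, 'e) path \<Rightarrow> 'v" where
  "ptail Q p = (if snd p = [] then fst p else tl_of Q (last (snd p)))"

definition cyclic_path :: "('v, 'e) quiver \<Rightarrow> ('v, 'e) path \<Rightarrow> bool" where
  "cyclic_path Q p \<longleftrightarrow> valid_path Q p \<and> snd p \<noteq> [] \<and> ptail Q p = fst p"

definition cyc_equiv :: "('v, 'e) path \<Rightarrow> ('v, 'e) path \<Rightarrow> bool" where
  "cyc_equiv p q \<longleftrightarrow> (\<exists>k. snd q = rotate k (snd p))"

text \<open>Since the quiver is finite, each A^d is finite-dimensional with basis the
  paths of length d, so an element of R<<A>> = prod_d A^d is exactly an arbitrary
  K-valued function on the (valid) paths: its coefficient family.\<close>

type_synonym ('v, 'e, 'k) cpelem = "('v, 'e) path \<Rightarrow> 'k"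

definition cpa :: "('v, 'e) quiver \<Rightarrow> ('v, 'e, 'k::field) cpelem set" where
  "cpa Q = {f. \<forall>p. f p \<noteq> 0 \<longrightarrow> valid_path Q p}"

definition cp_add :: "('v, 'e, 'k::field) cpelem \<Rightarrow> ('v, 'e, 'k) cpelem \<Rightarrow> ('v, 'e, 'k) cpelem" where
  "cp_add f g = (\<lambda>p. f p + g p)"

definition cp_diff :: "('v, 'e, 'k::field) cpelem \<Rightarrow> ('v, 'e, 'k) cpelem \<Rightarrow> ('v, 'e, 'k) cpelem" where
  "cp_diff f g = (\<lambda>p. f p - g p)"

definition cp_smult :: "'k::field \<Rightarrow> ('v, 'e, 'k) cpelem \<Rightarrow> ('v, 'e, 'k) cpelem" where
  "cp_smult c f = (\<lambda>p. c * f p)"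

definition cp_zero :: "('v, 'e, 'k::field) cpelem" where
  "cp_zero = (\<lambda>p. 0)"

definition cp_one :: "('v, 'e) quiver \<Rightarrow> ('v, 'e, 'k::field) cpelem" where
  "cp_one Q = (\<lambda>(v, xs). if xs = [] \<and> v \<in> verts Q then 1 else 0)"

definition cp_mult :: "('v, 'e) quiver \<Rightarrow> ('v, 'e, 'k::field) cpelem \<Rightarrow> ('v, 'e, 'k) cpelem
                       \<Rightarrow> ('v, 'e, 'k) cpelem" where
  "cp_mult Q f g = (\<lambda>(v, xs). \<Sum>k\<le>length xs.
       f (v, take k xs) * g (ptail Q (v, take k xs), drop k xs))"

text \<open>Closure in the m-adic topology (m^n = elements supported on paths of
  length at least n).\<close>
definition madic_closure :: "('v, 'e) quiver \<Rightarrow> ('v, 'e, 'k::field) cpelem set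
                              \<Rightarrow> ('v, 'e, 'k) cpelem set" where
  "madic_closure Q U = {f \<in> cpa Q. \<forall>n. \<exists>u\<in>U. \<forall>p. length (snd p) < n \<longrightarrow> f p = u p}"

inductive_set gen_ideal :: "('v, 'e) quiver \<Rightarrow> ('v, 'e, 'k::field) cpelem set
                              \<Rightarrow> ('v, 'e, 'k) cpelem set"
  for Q G where
  gi_zero: "cp_zero \<in> gen_ideal Q G"
| gi_gen: "g \<in> G \<Longrightarrow> x \<in> cpa Q \<Longrightarrow> y \<in> cpa Q \<Longrightarrow> cp_mult Q (cp_mult Q x g) y \<in> gen_ideal Q G"
| gi_add: "u \<in> gen_ideal Q G \<Longrightarrow> w \<in> gen_ideal Q G \<Longrightarrow> cp_add u w \<in> gen_ideal Q G"

inductive_set comm_span :: "('v, 'e) quiver \<Rightarrow> ('v, 'e, 'k::field) cpelem set"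
  for Q where
  cs_zero: "cp_zero \<in> comm_span Q"
| cs_comm: "x \<in> cpa Q \<Longrightarrow> y \<in> cpa Q \<Longrightarrow> cp_diff (cp_mult Q x y) (cp_mult Q y x) \<in> comm_span Q"
| cs_add: "u \<in> comm_span Q \<Longrightarrow> w \<in> comm_span Q \<Longrightarrow> cp_add u w \<in> comm_span Q"

text \<open>The subalgebra R = K^{Q_0} = span of the trivial paths e_i.\<close>
definition R_part :: "('v, 'e) quiver \<Rightarrow> ('v, 'e, 'k::field) cpelem set" where
  "R_part Q = {f \<in> cpa Q. \<forall>p. f p \<noteq> 0 \<longrightarrow> snd p = []}"

text \<open>Potentials: elements of the closure of the span of cyclic paths, i.e.
  elements supported on cyclic paths.\<close>
definition potential :: "('v, 'e) quiver \<Rightarrow> ('v, 'e, 'k::field) cpelem \<Rightarrow> bool" where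
  "potential Q S \<longleftrightarrow> S \<in> cpa Q \<and> (\<forall>p. S p \<noteq> 0 \<longrightarrow> cyclic_path Q p)"

definition is_QP :: "('v, 'e) quiver \<Rightarrow> ('v, 'e, 'k::field) cpelem \<Rightarrow> bool" where
  "is_QP Q S \<longleftrightarrow> wf_quiver Q \<and> no_loops Q \<and> potential Q S \<and>
     (\<forall>p q. S p \<noteq> 0 \<longrightarrow> S q \<noteq> 0 \<longrightarrow> cyc_equiv p q \<longrightarrow> p = q)"

text \<open>Cyclic derivative, extended by linearity and continuity:
  d_a(a_1...a_d) = sum_{p: a_p = a} a_(p+1)...a_d a_1...a_(p-1).
  The path (w, ys) arises from the occurrence of a at position p of the cyclic path c
  exactly when c rotated to start after position p equals ys @ [a]; its head is
  w = tl a.  Summing over the positions p amounts to summing over the rotations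
  rotate k (ys @ [a]), k < length ys + 1.\<close>
definition cyc_deriv :: "('v, 'e) quiver \<Rightarrow> 'e \<Rightarrow> ('v, 'e, 'k::field) cpelem
                          \<Rightarrow> ('v, 'e, 'k) cpelem" where
  "cyc_deriv Q a S = (\<lambda>(w, ys). if w = tl_of Q a then
       (\<Sum>k<Suc (length ys). S (hd_of Q (hd (rotate k (ys @ [a]))), rotate k (ys @ [a])))
     else 0)"

definition jac_ideal :: "('v, 'e) quiver \<Rightarrow> ('v, 'e, 'k::field) cpelem \<Rightarrow> ('v, 'e, 'k) cpelem set" where
  "jac_ideal Q S = madic_closure Q (gen_ideal Q {cyc_deriv Q a S | a. a \<in> arrs Q})"

definition jac_rel :: "('v, 'e) quiver \<Rightarrow> ('v, 'e, 'k::field) cpelem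
                        \<Rightarrow> (('v, 'e, 'k) cpelem \<times> ('v, 'e, 'k) cpelem) set" where
  "jac_rel Q S = {(f, g). f \<in> cpa Q \<and> g \<in> cpa Q \<and> cp_diff f g \<in> jac_ideal Q S}"

definition jacobian_algebra :: "('v, 'e) quiver \<Rightarrow> ('v, 'e, 'k::field) cpelem
                                 \<Rightarrow> ('v, 'e, 'k) cpelem set set" where
  "jacobian_algebra Q S = cpa Q // jac_rel Q S"

definition jac_fin_dim :: "('v, 'e) quiver \<Rightarrow> ('v, 'e, 'k::field) cpelem \<Rightarrow> bool" where
  "jac_fin_dim Q S \<longleftrightarrow> (\<exists>F. finite F \<and> F \<subseteq> cpa Q \<and>
     (\<forall>f\<in>cpa Q. \<exists>c. cp_diff f (\<lambda>p. \<Sum>x\<in>F. c x * x p) \<in> jac_ideal Q S))"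

text \<open>Def(A,S) = Tr(P(A,S))/R where Tr(P) = P/{P,P}.  The preimage in R<<A>> of
  {P,P} (closure of the span of commutators of P) is the m-adic closure of
  J(S) + span of commutators; hence Def(A,S) = R<<A>> / def_sub, where def_sub is
  that closure plus R.\<close>
definition def_sub :: "('v, 'e) quiver \<Rightarrow> ('v, 'e, 'k::field) cpelem \<Rightarrow> ('v, 'e, 'k) cpelem set" where
  "def_sub Q S = {cp_add u r | u r.
       u \<in> madic_closure Q {cp_add j c | j c. j \<in> jac_ideal Q S \<and> c \<in> comm_span Q}
       \<and> r \<in> R_part Q}"

definition def_rel :: "('v, 'e) quiver \<Rightarrow> ('v, 'e, 'k::field) cpelem
                        \<Rightarrow> (('v, 'e, 'k) cpelem \<times> ('v, 'e, 'k) cpelem) set" where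
  "def_rel Q S = {(f, g). f \<in> cpa Q \<and> g \<in> cpa Q \<and> cp_diff f g \<in> def_sub Q S}"

definition def_space :: "('v, 'e) quiver \<Rightarrow> ('v, 'e, 'k::field) cpelem
                          \<Rightarrow> ('v, 'e, 'k) cpelem set set" where
  "def_space Q S = cpa Q // def_rel Q S"

text \<open>Rigid: Def(A,S) = 0, i.e. every element of R<<A>> lies in def_sub.\<close>
definition rigid :: "('v, 'e) quiver \<Rightarrow> ('v, 'e, 'k::field) cpelem \<Rightarrow> bool" where
  "rigid Q S \<longleftrightarrow> cpa Q \<subseteq> def_sub Q S"

definition restrict_quiver :: "('v, 'e) quiver \<Rightarrow> 'v set \<Rightarrow> ('v, 'e) quiver" where
  "restrict_quiver Q I = Q\<lparr> verts := I,
      arrs := {a \<in> arrs Q. hd_of Q a \<in> I \<and> tl_of Q a \<in> I} \<rparr>"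

text \<open>psi_I: the continuous algebra homomorphism fixing the arrows of A|_I and killing
  the other arrows and the e_i, i not in I.\<close>
definition psi :: "('v, 'e) quiver \<Rightarrow> 'v set \<Rightarrow> ('v, 'e, 'k::field) cpelem \<Rightarrow> ('v, 'e, 'k) cpelem" where
  "psi Q I f = (\<lambda>p. if valid_path (restrict_quiver Q I) p then f p else 0)"

definition jac_induced :: "('v, 'e) quiver \<Rightarrow> 'v set \<Rightarrow> ('v, 'e, 'k::field) cpelem
                            \<Rightarrow> ('v, 'e, 'k) cpelem set \<Rightarrow> ('v, 'e, 'k) cpelem set" where
  "jac_induced Q I S C = jac_rel (restrict_quiver Q I) (psi Q I S) `` {psi Q I (SOME x. x \<in> C)}"

definition def_induced :: "('v, 'e) quiver \<Rightarrow> 'v set \<Rightarrow> ('v, 'e, 'k::field) cpelem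
                            \<Rightarrow> ('v, 'e, 'k) cpelem set \<Rightarrow> ('v, 'e, 'k) cpelem set" where
  "def_induced Q I S C = def_rel (restrict_quiver Q I) (psi Q I S) `` {psi Q I (SOME x. x \<in> C)}"

end

theory Submission
  imports Defs "HOL-Library.Function_Algebras"
begin

text \<open>A path of
  A|_I factors only into paths of A|_I, so psi_I is a unital algebra epimorphism
  R<<A>> -> R<<A|_I>> restricting to the identity on R<<A|_I>>; it is m-adically continuous and
  maps commutators to commutators and R onto R_I. The heart of the matter is its effect on
  cyclic derivatives: psi_I (d_a S) = d_a (S|_I) for every arrow a of A|_I, while
  psi_I (d_a S) = 0 for every other arrow a, because a rotation of a cycle through a whose
  remaining arrows all lie in A|_I forces both endpoints of a into I. Hence psi_I maps J(S) into
  J(S|_I) and the subspace defining Def(A,S) into the one defining Def(A|_I,S|_I), so it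
  descends to epimorphisms of the quotients, and finite dimension and rigidity pass to
  the images.\<close>

lemma restrict_quiver_simps [simp]:
  "verts (restrict_quiver Q I) = I"
  "arrs (restrict_quiver Q I) = {a \<in> arrs Q. hd_of Q a \<in> I \<and> tl_of Q a \<in> I}"
  "hd_of (restrict_quiver Q I) = hd_of Q"
  "tl_of (restrict_quiver Q I) = tl_of Q"
  by (simp_all add: restrict_quiver_def)

lemma ptail_restrict_quiver [simp]: "ptail (restrict_quiver Q I) = ptail Q"
  by (simp add: ptail_def fun_eq_iff)

lemma cp_mult_restrict_quiver [simp]: "cp_mult (restrict_quiver Q I) = cp_mult Q"
  by (simp add: cp_mult_def fun_eq_iff)

lemma composable_append:
  "composable Q (xs @ ys) \<longleftrightarrow> composable Q xs \<and> composable Q ys \<and>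
     (xs \<noteq> [] \<longrightarrow> ys \<noteq> [] \<longrightarrow> tl_of Q (last xs) = hd_of Q (hd ys))"
proof (induction xs)
  case (Cons x xs)
  then show ?case by (cases xs; cases ys) auto
qed simp

lemma composable_imp_set_arrs: "composable Q xs \<Longrightarrow> set xs \<subseteq> arrs Q"
  by (induction Q xs rule: composable.induct) auto

lemma composable_restrict_quiver:
  "composable (restrict_quiver Q I) xs \<longleftrightarrow>
     composable Q xs \<and> set xs \<subseteq> arrs (restrict_quiver Q I)"
  by (induction "restrict_quiver Q I" xs rule: composable.induct) auto

lemma valid_path_restrict_quiver:
  assumes "I \<subseteq> verts Q"
  shows "valid_path (restrict_quiver Q I) (v, xs) \<longleftrightarrow>
     valid_path Q (v, xs) \<and> set xs \<subseteq> arrs (restrict_quiver Q I) \<and> (xs = [] \<longrightarrow> v \<in> I)"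
  using assms by (cases xs) (auto simp: valid_path_def composable_restrict_quiver)

lemma valid_path_restrict_quiver_ends:
  assumes "valid_path (restrict_quiver Q I) (v, xs)"
  shows "v \<in> I" "ptail Q (v, xs) \<in> I"
proof -
  have "xs = [] \<Longrightarrow> v \<in> I" and "xs \<noteq> [] \<Longrightarrow> v = hd_of Q (hd xs)"
    and "set xs \<subseteq> arrs (restrict_quiver Q I)"
    using assms by (auto simp: valid_path_def composable_restrict_quiver split: list.splits)
  then show "v \<in> I" "ptail Q (v, xs) \<in> I"
    by (cases xs; force simp: ptail_def)+
qed

lemma valid_path_append:
  assumes ends: "\<forall>a\<in>arrs Q. hd_of Q a \<in> verts Q \<and> tl_of Q a \<in> verts Q"
  shows "valid_path Q (v, ys @ zs) \<longleftrightarrow> valid_path Q (v, ys) \<and> valid_path Q (ptail Q (v, ys), zs)"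
proof (cases "ys = [] \<or> zs = []")
  case True
  have "composable Q xs \<Longrightarrow> xs \<noteq> [] \<Longrightarrow> hd xs \<in> arrs Q \<and> last xs \<in> arrs Q" for xs
    using composable_imp_set_arrs by fastforce
  then show ?thesis
    using True ends by (cases ys; cases zs) (fastforce simp: valid_path_def ptail_def)+
next
  case False
  then show ?thesis
    using composable_append[of Q ys zs]
    by (cases ys; cases zs) (auto simp: valid_path_def ptail_def)
qed

section \<open>Rotations of cycles\<close>

definition cyclic_word :: "('v, 'e) quiver \<Rightarrow> 'e list \<Rightarrow> bool" where
  "cyclic_word Q xs \<longleftrightarrow> xs \<noteq> [] \<and> composable Q xs \<and> tl_of Q (last xs) = hd_of Q (hd xs)"

lemma cyclic_path_iff_cyclic_word:
  "cyclic_path Q (v, xs) \<longleftrightarrow> cyclic_word Q xs \<and> v = hd_of Q (hd xs)"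
  by (cases xs) (auto simp: cyclic_path_def valid_path_def ptail_def cyclic_word_def)

lemma cyclic_word_rotate1:
  assumes "cyclic_word Q xs"
  shows "cyclic_word Q (rotate1 xs)"
proof -
  obtain a ys where xs: "xs = a # ys"
    using assms by (cases xs) (auto simp: cyclic_word_def)
  show ?thesis
  proof (cases "ys = []")
    case False
    then show ?thesis
      using assms composable_append[of Q "[a]" ys] composable_append[of Q ys "[a]"]
      by (auto simp: xs cyclic_word_def)
  qed (use assms xs in simp)
qed

lemma cyclic_word_rotate: "cyclic_word Q xs \<Longrightarrow> cyclic_word Q (rotate k xs)"
  by (induction k) (auto intro: cyclic_word_rotate1)

lemma cyclic_word_rotate_iff: "cyclic_word Q (rotate k xs) \<longleftrightarrow> cyclic_word Q xs"
proof
  assume rot: "cyclic_word Q (rotate k xs)"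
  define n where "n = length xs"
  have "n > 0"
    using rot by (auto simp: cyclic_word_def n_def)
  then have "(n - k mod n + k) mod n = 0"
    by (metis add.commute mod_add_right_eq mod_less_divisor mod_self less_imp_le
        le_add_diff_inverse2)
  then have "rotate (n - k mod n) (rotate k xs) = xs"
    by (simp add: rotate_rotate n_def)
  then show "cyclic_word Q xs"
    using cyclic_word_rotate[OF rot] by metis
qed (rule cyclic_word_rotate)

lemma cyclic_word_snoc:
  assumes "cyclic_word Q (ys @ [a])"
  shows "a \<in> arrs Q" "ys \<noteq> [] \<Longrightarrow> valid_path Q (tl_of Q a, ys)"
    "ptail Q (tl_of Q a, ys) = hd_of Q a"
  using assms composable_append[of Q ys "[a]"]
  by (cases ys; auto simp: cyclic_word_def valid_path_def ptail_def)+

lemma cp_add_eq_plus [simp]: "cp_add f g = f + g"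
  by (simp add: cp_add_def plus_fun_def)

lemma cp_diff_eq_minus [simp]: "cp_diff f g = f - g"
  by (simp add: cp_diff_def fun_diff_def)

lemma cp_zero_eq_0 [simp]: "cp_zero = 0"
  by (simp add: cp_zero_def zero_fun_def)

lemma cp_mult_uminus_left: "cp_mult Q (- f) g = - cp_mult Q f g"
  by (simp add: cp_mult_def fun_eq_iff sum_negf)

lemma cp_mult_zero_left [simp]: "cp_mult Q 0 g = 0"
  by (simp add: cp_mult_def fun_eq_iff)

lemma cp_mult_zero_right [simp]: "cp_mult Q f 0 = 0"
  by (simp add: cp_mult_def fun_eq_iff)

lemma zero_in_cpa: "0 \<in> cpa Q"
  by (simp add: cpa_def)

lemma uminus_in_cpa: "f \<in> cpa Q \<Longrightarrow> - f \<in> cpa Q"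
  by (simp add: cpa_def)

lemma diff_in_cpa: "f \<in> cpa Q \<Longrightarrow> g \<in> cpa Q \<Longrightarrow> f - g \<in> cpa Q"
  by (simp add: cpa_def) (metis diff_self)

lemma psi_add: "psi Q I (f + g) = psi Q I f + psi Q I g"
  by (simp add: psi_def fun_eq_iff)

lemma psi_diff: "psi Q I (f - g) = psi Q I f - psi Q I g"
  by (simp add: psi_def fun_eq_iff)

lemma psi_zero: "psi Q I 0 = 0"
  by (simp add: psi_def fun_eq_iff)

lemma psi_smult: "psi Q I (cp_smult c f) = cp_smult c (psi Q I f)"
  by (simp add: psi_def cp_smult_def fun_eq_iff)

lemma psi_lincomb: "psi Q I (\<lambda>p. \<Sum>x\<in>F. c x * x p) = (\<lambda>p. \<Sum>x\<in>F. c x * psi Q I x p)"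
  by (simp add: psi_def fun_eq_iff)

lemma psi_one:
  assumes "I \<subseteq> verts Q"
  shows "psi Q I (cp_one Q) = cp_one (restrict_quiver Q I)"
proof (rule ext)
  fix p
  show "psi Q I (cp_one Q) p = cp_one (restrict_quiver Q I) p"
    using assms by (cases p; cases "snd p") (auto simp: psi_def cp_one_def valid_path_def)
qed

lemma psi_mult: "psi Q I (cp_mult Q f g) = cp_mult (restrict_quiver Q I) (psi Q I f) (psi Q I g)"
proof (rule ext, clarify)
  fix v xs
  have split: "valid_path (restrict_quiver Q I) (v, xs) \<longleftrightarrow>
      valid_path (restrict_quiver Q I) (v, take k xs) \<and>
      valid_path (restrict_quiver Q I) (ptail Q (v, take k xs), drop k xs)" for k
    using valid_path_append[of "restrict_quiver Q I" v "take k xs" "drop k xs"] by simp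
  show "psi Q I (cp_mult Q f g) (v, xs) = cp_mult (restrict_quiver Q I) (psi Q I f) (psi Q I g) (v, xs)"
    using split by (auto simp: psi_def cp_mult_def intro!: sum.neutral sum.cong)
qed

lemma psi_in_cpa: "psi Q I f \<in> cpa (restrict_quiver Q I)"
  by (simp add: cpa_def psi_def)

lemma cpa_restrict_quiver_subset: "I \<subseteq> verts Q \<Longrightarrow> cpa (restrict_quiver Q I) \<subseteq> cpa Q"
  using valid_path_restrict_quiver by (fastforce simp: cpa_def)

lemma psi_eq_self: "f \<in> cpa (restrict_quiver Q I) \<Longrightarrow> psi Q I f = f"
  by (auto simp: psi_def cpa_def fun_eq_iff)

lemma psi_image:
  assumes "I \<subseteq> verts Q"
  shows "psi Q I ` cpa Q = cpa (restrict_quiver Q I)"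
proof
  show "cpa (restrict_quiver Q I) \<subseteq> psi Q I ` cpa Q"
  proof
    fix f
    assume f: "f \<in> cpa (restrict_quiver Q I)"
    then have "f \<in> cpa Q"
      using cpa_restrict_quiver_subset[OF assms] by blast
    then show "f \<in> psi Q I ` cpa Q"
      using psi_eq_self[OF f] by force
  qed
qed (use psi_in_cpa in blast)

section \<open>Cyclic derivatives under restriction\<close>

text \<open>The cycle rotate k (ys @ [a]), paired with its head vertex, contributes the k-th term of
  the coefficient of (tl a, ys) in d_a S.\<close>

lemma valid_path_restrict_rotate_snoc:
  assumes I: "I \<subseteq> verts Q" and a: "a \<in> arrs (restrict_quiver Q I)"
    and cyc: "cyclic_path Q (hd_of Q (hd (rotate k (ys @ [a]))), rotate k (ys @ [a]))"
  shows "valid_path (restrict_quiver Q I) (hd_of Q (hd (rotate k (ys @ [a]))), rotate k (ys @ [a]))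
     \<longleftrightarrow> valid_path (restrict_quiver Q I) (tl_of Q a, ys)"
proof -
  have "cyclic_word Q (ys @ [a])"
    using cyc by (simp add: cyclic_path_iff_cyclic_word cyclic_word_rotate_iff)
  then have "valid_path Q (tl_of Q a, ys)"
    using cyclic_word_snoc(2) I a by (cases "ys = []") (auto simp: valid_path_def)
  moreover have "valid_path Q (hd_of Q (hd (rotate k (ys @ [a]))), rotate k (ys @ [a]))"
    using cyc by (simp add: cyclic_path_def)
  ultimately show ?thesis
    using I a by (auto simp: valid_path_restrict_quiver)
qed

lemma cyclic_rotate_snoc_arrow_in_restrict_quiver:
  assumes cyc: "cyclic_path Q (hd_of Q (hd (rotate k (ys @ [a]))), rotate k (ys @ [a]))"
    and ys: "valid_path (restrict_quiver Q I) (tl_of Q a, ys)"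
  shows "a \<in> arrs (restrict_quiver Q I)"
proof -
  have "cyclic_word Q (ys @ [a])"
    using cyc by (simp add: cyclic_path_iff_cyclic_word cyclic_word_rotate_iff)
  then show ?thesis
    using cyclic_word_snoc valid_path_restrict_quiver_ends[OF ys] by fastforce
qed

lemma psi_cyc_deriv_restricted_arrow:
  assumes I: "I \<subseteq> verts Q" and pot: "potential Q S" and a: "a \<in> arrs (restrict_quiver Q I)"
  shows "psi Q I (cyc_deriv Q a S) = cyc_deriv (restrict_quiver Q I) a (psi Q I S)"
proof (rule ext, clarify)
  fix w ys
  let ?c = "\<lambda>k. (hd_of Q (hd (rotate k (ys @ [a]))), rotate k (ys @ [a]))"
  have coeff: "psi Q I S (?c k) = (if valid_path (restrict_quiver Q I) (tl_of Q a, ys) then S (?c k) else 0)"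
    for k
    using valid_path_restrict_rotate_snoc[OF I a, of k ys] pot
    by (cases "S (?c k) = 0") (auto simp: psi_def potential_def)
  show "psi Q I (cyc_deriv Q a S) (w, ys) = cyc_deriv (restrict_quiver Q I) a (psi Q I S) (w, ys)"
    unfolding psi_def[of Q I "cyc_deriv Q a S"]
    by (cases "valid_path (restrict_quiver Q I) (tl_of Q a, ys)") (simp_all add: cyc_deriv_def coeff)
qed

lemma psi_cyc_deriv_deleted_arrow:
  assumes pot: "potential Q S" and a: "a \<notin> arrs (restrict_quiver Q I)"
  shows "psi Q I (cyc_deriv Q a S) = 0"
proof (rule ext, clarify)
  fix w ys
  have "S (hd_of Q (hd (rotate k (ys @ [a]))), rotate k (ys @ [a])) = 0"
    if "valid_path (restrict_quiver Q I) (tl_of Q a, ys)" for k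
    using cyclic_rotate_snoc_arrow_in_restrict_quiver[OF _ that] a pot
    by (auto simp: potential_def)
  then show "psi Q I (cyc_deriv Q a S) (w, ys) = 0 (w, ys)"
    by (simp add: psi_def cyc_deriv_def)
qed

definition add_subgroup :: "'a::ab_group_add set \<Rightarrow> bool" where
  "add_subgroup U \<longleftrightarrow> 0 \<in> U \<and> (\<forall>x\<in>U. \<forall>y\<in>U. x - y \<in> U)"

lemma add_subgroupI:
  assumes "0 \<in> U" "\<And>x y. x \<in> U \<Longrightarrow> y \<in> U \<Longrightarrow> x + y \<in> U"
    "\<And>x. x \<in> U \<Longrightarrow> - x \<in> U"
  shows "add_subgroup U"
  using assms by (metis add_subgroup_def diff_conv_add_uminus)

lemma add_subgroup_add:
  assumes "add_subgroup U" "x \<in> U" "y \<in> U"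
  shows "x + y \<in> U"
  using assms by (metis add_subgroup_def diff_0 diff_minus_eq_add)

lemma equiv_diff_rel:
  assumes "add_subgroup U"
  shows "equiv A {(f, g). f \<in> A \<and> g \<in> A \<and> f - g \<in> U}"
proof (rule equivI)
  have sym_diff: "g - f = 0 - (f - g)" and trans_diff: "f - h = (f - g) + (g - h)" for f g h :: 'a
    by simp_all
  show "refl_on A {(f, g). f \<in> A \<and> g \<in> A \<and> f - g \<in> U}"
    using assms by (auto simp: refl_on_def add_subgroup_def)
  show "sym {(f, g). f \<in> A \<and> g \<in> A \<and> f - g \<in> U}"
    using assms sym_diff unfolding sym_def add_subgroup_def by fastforce
  show "trans {(f, g). f \<in> A \<and> g \<in> A \<and> f - g \<in> U}"
    using add_subgroup_add[OF assms] trans_diff unfolding trans_def by fastforce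
qed auto

lemma add_subgroup_set_plus:
  assumes U: "add_subgroup U" and V: "add_subgroup V"
  shows "add_subgroup {u + v | u v. u \<in> U \<and> v \<in> V}"
  unfolding add_subgroup_def
proof (intro conjI ballI)
  show "0 \<in> {u + v | u v. u \<in> U \<and> v \<in> V}"
    using U V by (force simp: add_subgroup_def)
  fix x y
  assume "x \<in> {u + v | u v. u \<in> U \<and> v \<in> V}" "y \<in> {u + v | u v. u \<in> U \<and> v \<in> V}"
  then obtain u v u' v' where "x = u + v" "y = u' + v'" "u \<in> U" "v \<in> V" "u' \<in> U" "v' \<in> V"
    by blast
  moreover have "(u + v) - (u' + v') = (u - u') + (v - v')"
    by simp
  ultimately show "x - y \<in> {u + v | u v. u \<in> U \<and> v \<in> V}"
    using U V unfolding add_subgroup_def by blast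
qed

lemma uminus_in_gen_ideal: "u \<in> gen_ideal Q G \<Longrightarrow> - u \<in> gen_ideal Q G"
proof (induction rule: gen_ideal.induct)
  case gi_zero
  then show ?case
    using gen_ideal.gi_zero by (simp only: cp_zero_eq_0 minus_zero)
next
  case (gi_gen g x y)
  have "- cp_mult Q (cp_mult Q x g) y = cp_mult Q (cp_mult Q (- x) g) y"
    by (simp only: cp_mult_uminus_left)
  then show ?case
    using gen_ideal.gi_gen[OF gi_gen.hyps(1) uminus_in_cpa gi_gen.hyps(3)] gi_gen.hyps(2) by metis
next
  case (gi_add u w)
  have "- cp_add u w = cp_add (- u) (- w)"
    by simp
  then show ?case
    using gen_ideal.gi_add[OF gi_add.IH] by metis
qed

lemma add_subgroup_gen_ideal: "add_subgroup (gen_ideal Q G)"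
  using gen_ideal.gi_zero gen_ideal.gi_add uminus_in_gen_ideal by (intro add_subgroupI) simp_all

lemma uminus_in_comm_span: "u \<in> comm_span Q \<Longrightarrow> - u \<in> comm_span Q"
proof (induction rule: comm_span.induct)
  case cs_zero
  then show ?case
    using comm_span.cs_zero by (simp only: cp_zero_eq_0 minus_zero)
next
  case (cs_comm x y)
  have "- cp_diff (cp_mult Q x y) (cp_mult Q y x) = cp_diff (cp_mult Q y x) (cp_mult Q x y)"
    by simp
  then show ?case
    using comm_span.cs_comm[OF cs_comm.hyps(2,1)] by metis
next
  case (cs_add u w)
  have "- cp_add u w = cp_add (- u) (- w)"
    by simp
  then show ?case
    using comm_span.cs_add[OF cs_add.IH] by metis
qed

lemma add_subgroup_comm_span: "add_subgroup (comm_span Q)"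
  using comm_span.cs_zero comm_span.cs_add uminus_in_comm_span by (intro add_subgroupI) simp_all

lemma add_subgroup_madic_closure:
  assumes "add_subgroup U"
  shows "add_subgroup (madic_closure Q U)"
  unfolding add_subgroup_def
proof (intro conjI ballI)
  show "0 \<in> madic_closure Q U"
    using assms zero_in_cpa by (auto simp: madic_closure_def add_subgroup_def intro!: bexI[of _ 0])
  fix x y
  assume x: "x \<in> madic_closure Q U" and y: "y \<in> madic_closure Q U"
  have "\<exists>u\<in>U. \<forall>p. length (snd p) < n \<longrightarrow> (x - y) p = u p" for n
  proof -
    obtain u where "u \<in> U" "\<forall>p. length (snd p) < n \<longrightarrow> x p = u p"
      using x unfolding madic_closure_def by blast
    moreover obtain w where "w \<in> U" "\<forall>p. length (snd p) < n \<longrightarrow> y p = w p"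
      using y unfolding madic_closure_def by blast
    ultimately show ?thesis
      using assms by (intro bexI[of _ "u - w"]) (auto simp: add_subgroup_def)
  qed
  then show "x - y \<in> madic_closure Q U"
    using x y by (simp add: madic_closure_def diff_in_cpa)
qed

lemma add_subgroup_R_part: "add_subgroup (R_part Q)"
  by (auto simp: add_subgroup_def R_part_def zero_in_cpa diff_in_cpa) metis

lemma add_subgroup_jac_ideal: "add_subgroup (jac_ideal Q S)"
  unfolding jac_ideal_def by (rule add_subgroup_madic_closure[OF add_subgroup_gen_ideal])

lemma add_subgroup_def_sub: "add_subgroup (def_sub Q S)"
  unfolding def_sub_def cp_add_eq_plus
  by (intro add_subgroup_set_plus add_subgroup_madic_closure add_subgroup_jac_ideal
      add_subgroup_comm_span add_subgroup_R_part)

lemma equiv_jac_rel: "equiv (cpa Q) (jac_rel Q S)"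
  unfolding jac_rel_def cp_diff_eq_minus by (rule equiv_diff_rel[OF add_subgroup_jac_ideal])

lemma equiv_def_rel: "equiv (cpa Q) (def_rel Q S)"
  unfolding def_rel_def cp_diff_eq_minus by (rule equiv_diff_rel[OF add_subgroup_def_sub])

lemma psi_madic_closure:
  assumes "f \<in> madic_closure Q U"
  shows "psi Q I f \<in> madic_closure (restrict_quiver Q I) (psi Q I ` U)"
proof -
  have "\<exists>u\<in>psi Q I ` U. \<forall>p. length (snd p) < n \<longrightarrow> psi Q I f p = u p" for n
  proof -
    obtain u where "u \<in> U" "\<forall>p. length (snd p) < n \<longrightarrow> f p = u p"
      using assms unfolding madic_closure_def by blast
    then show ?thesis
      by (intro bexI[of _ "psi Q I u"]) (auto simp: psi_def)
  qed
  then show ?thesis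
    by (simp add: madic_closure_def psi_in_cpa)
qed

lemma madic_closure_mono: "U \<subseteq> V \<Longrightarrow> madic_closure Q U \<subseteq> madic_closure Q V"
  unfolding madic_closure_def by blast

lemma psi_gen_ideal_cyc_derivs:
  assumes I: "I \<subseteq> verts Q" and pot: "potential Q S"
  shows "u \<in> gen_ideal Q {cyc_deriv Q a S | a. a \<in> arrs Q} \<Longrightarrow>
    psi Q I u \<in> gen_ideal (restrict_quiver Q I)
      {cyc_deriv (restrict_quiver Q I) a (psi Q I S) | a. a \<in> arrs (restrict_quiver Q I)}"
proof (induction rule: gen_ideal.induct)
  case gi_zero
  then show ?case
    using gen_ideal.gi_zero by (simp only: cp_zero_eq_0 psi_zero)
next
  case (gi_gen g x y)
  then obtain a where g: "g = cyc_deriv Q a S"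
    by blast
  show ?case
  proof (cases "a \<in> arrs (restrict_quiver Q I)")
    case True
    then show ?thesis
      unfolding psi_mult g psi_cyc_deriv_restricted_arrow[OF I pot True]
      by (intro gen_ideal.gi_gen[OF _ psi_in_cpa psi_in_cpa]) blast
  next
    case False
    then show ?thesis
      using gen_ideal.gi_zero
      unfolding psi_mult g psi_cyc_deriv_deleted_arrow[OF pot False]
        cp_mult_zero_left cp_mult_zero_right
      by (simp only: cp_zero_eq_0)
  qed
next
  case (gi_add u w)
  show ?case
    unfolding cp_add_eq_plus psi_add by (rule gen_ideal.gi_add[OF gi_add.IH, unfolded cp_add_eq_plus])
qed

lemma psi_jac_ideal:
  assumes I: "I \<subseteq> verts Q" and pot: "potential Q S" and f: "f \<in> jac_ideal Q S"
  shows "psi Q I f \<in> jac_ideal (restrict_quiver Q I) (psi Q I S)"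
proof -
  have "psi Q I ` gen_ideal Q {cyc_deriv Q a S | a. a \<in> arrs Q} \<subseteq>
      gen_ideal (restrict_quiver Q I)
        {cyc_deriv (restrict_quiver Q I) a (psi Q I S) | a. a \<in> arrs (restrict_quiver Q I)}"
    using psi_gen_ideal_cyc_derivs[OF I pot] by blast
  then show ?thesis
    using psi_madic_closure[OF f[unfolded jac_ideal_def]] madic_closure_mono
    unfolding jac_ideal_def by blast
qed

lemma psi_comm_span:
  "u \<in> comm_span Q \<Longrightarrow> psi Q I u \<in> comm_span (restrict_quiver Q I)"
proof (induction rule: comm_span.induct)
  case cs_zero
  then show ?case
    using comm_span.cs_zero by (simp only: cp_zero_eq_0 psi_zero)
next
  case (cs_comm x y)
  show ?case
    unfolding cp_diff_eq_minus psi_diff psi_mult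
    by (rule comm_span.cs_comm[OF psi_in_cpa psi_in_cpa, unfolded cp_diff_eq_minus])
next
  case (cs_add u w)
  show ?case
    unfolding cp_add_eq_plus psi_add by (rule comm_span.cs_add[OF cs_add.IH, unfolded cp_add_eq_plus])
qed

lemma psi_R_part:
  assumes "r \<in> R_part Q"
  shows "psi Q I r \<in> R_part (restrict_quiver Q I)"
proof -
  have "\<forall>p. psi Q I r p \<noteq> 0 \<longrightarrow> snd p = []"
    using assms by (simp add: R_part_def psi_def)
  then show ?thesis
    unfolding R_part_def using psi_in_cpa by blast
qed

lemma psi_def_sub:
  assumes I: "I \<subseteq> verts Q" and pot: "potential Q S" and f: "f \<in> def_sub Q S"
  shows "psi Q I f \<in> def_sub (restrict_quiver Q I) (psi Q I S)"
proof -
  let ?U = "{j + c | j c. j \<in> jac_ideal Q S \<and> c \<in> comm_span Q}"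
  let ?U' = "{j + c | j c. j \<in> jac_ideal (restrict_quiver Q I) (psi Q I S)
    \<and> c \<in> comm_span (restrict_quiver Q I)}"
  have "psi Q I ` ?U \<subseteq> ?U'"
    using psi_jac_ideal[OF I pot] psi_comm_span psi_add by blast
  then have closure: "psi Q I u \<in> madic_closure (restrict_quiver Q I) ?U'"
    if "u \<in> madic_closure Q ?U" for u
    by (rule subsetD[OF madic_closure_mono psi_madic_closure[OF that]])
  obtain u r where "f = u + r" "u \<in> madic_closure Q ?U" "r \<in> R_part Q"
    using f unfolding def_sub_def cp_add_eq_plus by blast
  then show ?thesis
    unfolding def_sub_def cp_add_eq_plus using closure psi_R_part psi_add by blast
qed

lemma psi_jac_rel:
  assumes "I \<subseteq> verts Q" "potential Q S" "(f, g) \<in> jac_rel Q S"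
  shows "(psi Q I f, psi Q I g) \<in> jac_rel (restrict_quiver Q I) (psi Q I S)"
  using assms psi_jac_ideal[of I Q S "f - g"] by (simp add: jac_rel_def psi_in_cpa psi_diff)

lemma psi_def_rel:
  assumes "I \<subseteq> verts Q" "potential Q S" "(f, g) \<in> def_rel Q S"
  shows "(psi Q I f, psi Q I g) \<in> def_rel (restrict_quiver Q I) (psi Q I S)"
  using assms psi_def_sub[of I Q S "f - g"] by (simp add: def_rel_def psi_in_cpa psi_diff)

section \<open>Induced maps on quotients\<close>

lemma quotient_map_class:
  assumes "refl_on A R" "equiv B R'" "\<And>f g. (f, g) \<in> R \<Longrightarrow> (h f, h g) \<in> R'" "f \<in> A"
  shows "R' `` {h (SOME x. x \<in> R `` {f})} = R' `` {h f}"
proof -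
  have "f \<in> R `` {f}"
    using assms(1,4) by (simp add: refl_on_def)
  then have "(SOME x. x \<in> R `` {f}) \<in> R `` {f}"
    by (rule someI)
  then have "(h f, h (SOME x. x \<in> R `` {f})) \<in> R'"
    using assms(3) by simp
  from equiv_class_eq[OF assms(2) this] show ?thesis
    by (rule sym)
qed

lemma quotient_map_image:
  assumes "refl_on A R" "equiv B R'" "\<And>f g. (f, g) \<in> R \<Longrightarrow> (h f, h g) \<in> R'" "h ` A = B"
  shows "(\<lambda>C. R' `` {h (SOME x. x \<in> C)}) ` (A // R) = B // R'"
proof -
  have "A // R = (\<lambda>f. R `` {f}) ` A"
    by (auto simp: quotient_def)
  then have "(\<lambda>C. R' `` {h (SOME x. x \<in> C)}) ` (A // R)
      = (\<lambda>f. R' `` {h (SOME x. x \<in> R `` {f})}) ` A"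
    by (simp add: image_image)
  also have "\<dots> = (\<lambda>f. R' `` {h f}) ` A"
    using quotient_map_class[of A R B R' h] assms(1-3) by (intro image_cong) simp_all
  also have "\<dots> = B // R'"
    using assms(4) by (auto simp: quotient_def)
  finally show ?thesis .
qed

lemma lincomb_image:
  fixes c :: "'x \<Rightarrow> 'k::comm_semiring_0"
  assumes "finite F"
  obtains d where "(\<lambda>p. \<Sum>x\<in>F. c x * h x p) = (\<lambda>p. \<Sum>y\<in>h ` F. d y * y p)"
proof
  show "(\<lambda>p. \<Sum>x\<in>F. c x * h x p) = (\<lambda>p. \<Sum>y\<in>h ` F. (\<Sum>x\<in>{x \<in> F. h x = y}. c x) * y p)"
  proof (rule ext)
    fix p
    have "(\<Sum>x\<in>F. c x * h x p) = (\<Sum>y\<in>h ` F. \<Sum>x\<in>{x \<in> F. h x = y}. c x * h x p)"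
      by (rule sum.image_gen[OF assms])
    also have "\<dots> = (\<Sum>y\<in>h ` F. (\<Sum>x\<in>{x \<in> F. h x = y}. c x) * y p)"
    proof (rule sum.cong[OF refl])
      fix y
      have "(\<Sum>x\<in>{x \<in> F. h x = y}. c x * h x p) = (\<Sum>x\<in>{x \<in> F. h x = y}. c x * y p)"
        by (rule sum.cong) auto
      then show "(\<Sum>x\<in>{x \<in> F. h x = y}. c x * h x p) = (\<Sum>x\<in>{x \<in> F. h x = y}. c x) * y p"
        by (simp add: sum_distrib_right)
    qed
    finally show "(\<Sum>x\<in>F. c x * h x p) = (\<Sum>y\<in>h ` F. (\<Sum>x\<in>{x \<in> F. h x = y}. c x) * y p)" .
  qed
qed

lemma jac_fin_dim_restrict:
  fixes S :: "('v, 'e, 'k::field) cpelem"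
  assumes I: "I \<subseteq> verts Q" and pot: "potential Q S" and fin: "jac_fin_dim Q S"
  shows "jac_fin_dim (restrict_quiver Q I) (psi Q I S)"
proof -
  obtain F where F: "finite F" "F \<subseteq> cpa Q"
    and span: "\<forall>f\<in>cpa Q. \<exists>c. f - (\<lambda>p. \<Sum>x\<in>F. c x * x p) \<in> jac_ideal Q S"
    using fin unfolding jac_fin_dim_def cp_diff_eq_minus by blast
  have span_restrict: "\<forall>f\<in>cpa (restrict_quiver Q I). \<exists>d.
      f - (\<lambda>p. \<Sum>y\<in>psi Q I ` F. d y * y p) \<in> jac_ideal (restrict_quiver Q I) (psi Q I S)"
  proof
    fix f :: "('v, 'e, 'k) cpelem"
    assume f: "f \<in> cpa (restrict_quiver Q I)"
    obtain c where c: "f - (\<lambda>p. \<Sum>x\<in>F. c x * x p) \<in> jac_ideal Q S"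
      using span f cpa_restrict_quiver_subset[OF I] by blast
    have "f - (\<lambda>p. \<Sum>x\<in>F. c x * psi Q I x p) \<in> jac_ideal (restrict_quiver Q I) (psi Q I S)"
      using psi_jac_ideal[OF I pot c] unfolding psi_diff psi_eq_self[OF f] psi_lincomb .
    moreover obtain d where "(\<lambda>p. \<Sum>x\<in>F. c x * psi Q I x p) = (\<lambda>p. \<Sum>y\<in>psi Q I ` F. d y * y p)"
      using lincomb_image[OF F(1)] .
    ultimately show "\<exists>d. f - (\<lambda>p. \<Sum>y\<in>psi Q I ` F. d y * y p)
        \<in> jac_ideal (restrict_quiver Q I) (psi Q I S)"
      by (intro exI[of _ d]) simp
  qed
  have "finite (psi Q I ` F)" "psi Q I ` F \<subseteq> cpa (restrict_quiver Q I)"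
    using F(1) psi_in_cpa by auto
  with span_restrict show ?thesis
    unfolding jac_fin_dim_def cp_diff_eq_minus by blast
qed

lemma rigid_restrict:
  fixes S :: "('v, 'e, 'k::field) cpelem"
  assumes I: "I \<subseteq> verts Q" and pot: "potential Q S" and rig: "rigid Q S"
  shows "rigid (restrict_quiver Q I) (psi Q I S)"
  unfolding rigid_def
proof
  fix f :: "('v, 'e, 'k) cpelem"
  assume f: "f \<in> cpa (restrict_quiver Q I)"
  then have "f \<in> def_sub Q S"
    using rig cpa_restrict_quiver_subset[OF I] unfolding rigid_def by blast
  from psi_def_sub[OF I pot this] show "f \<in> def_sub (restrict_quiver Q I) (psi Q I S)"
    unfolding psi_eq_self[OF f] .
qed

theorem proposition8p9:
  fixes Q :: "('v, 'e) quiver" and S :: "('v, 'e, 'k::field) cpelem" and I :: "'v set"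
  assumes QP: "is_QP Q S"
    and I: "I \<subseteq> verts Q"
  shows
    \<comment> \<open>psi_I is a (unital, K-linear) algebra homomorphism of R<<A>> onto R<<A|_I>>\<close>
    "psi Q I ` cpa Q = cpa (restrict_quiver Q I)
     \<and> (\<forall>f::('v, 'e, 'k) cpelem. \<forall>g::('v, 'e, 'k) cpelem. f \<in> cpa Q \<longrightarrow> g \<in> cpa Q \<longrightarrow>
          psi Q I (cp_add f g) = cp_add (psi Q I f) (psi Q I g)
        \<and> psi Q I (cp_mult Q f g) = cp_mult (restrict_quiver Q I) (psi Q I f) (psi Q I g))
     \<and> (\<forall>(c::'k) (f::('v, 'e, 'k) cpelem). f \<in> cpa Q \<longrightarrow> psi Q I (cp_smult c f) = cp_smult c (psi Q I f))
     \<and> psi Q I (cp_one Q) = cp_one (restrict_quiver Q I)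
     \<comment> \<open>it induces an epimorphism P(A,S) -> P(A|_I, S|_I)\<close>
     \<and> (\<forall>f g. (f, g) \<in> jac_rel Q S \<longrightarrow>
          (psi Q I f, psi Q I g) \<in> jac_rel (restrict_quiver Q I) (psi Q I S))
     \<and> (\<forall>f\<in>cpa Q. jac_induced Q I S (jac_rel Q S `` {f})
          = jac_rel (restrict_quiver Q I) (psi Q I S) `` {psi Q I f})
     \<and> jac_induced Q I S ` jacobian_algebra Q S
          = jacobian_algebra (restrict_quiver Q I) (psi Q I S)
     \<comment> \<open>and an epimorphism Def(A,S) -> Def(A|_I, S|_I)\<close>
     \<and> (\<forall>f g. (f, g) \<in> def_rel Q S \<longrightarrow>
          (psi Q I f, psi Q I g) \<in> def_rel (restrict_quiver Q I) (psi Q I S))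
     \<and> (\<forall>f\<in>cpa Q. def_induced Q I S (def_rel Q S `` {f})
          = def_rel (restrict_quiver Q I) (psi Q I S) `` {psi Q I f})
     \<and> def_induced Q I S ` def_space Q S
          = def_space (restrict_quiver Q I) (psi Q I S)
     \<comment> \<open>consequences\<close>
     \<and> (jac_fin_dim Q S \<longrightarrow> jac_fin_dim (restrict_quiver Q I) (psi Q I S))
     \<and> (rigid Q S \<longrightarrow> rigid (restrict_quiver Q I) (psi Q I S))"
proof -
  have pot: "potential Q S"
    using QP by (simp add: is_QP_def)
  have refl: "refl_on (cpa Q) (jac_rel Q S)" "refl_on (cpa Q) (def_rel Q S)"
    using equiv_jac_rel[of Q S] equiv_def_rel[of Q S] by (simp_all add: equiv_def)
  note jac_compat = psi_jac_rel[OF I pot] and def_compat = psi_def_rel[OF I pot]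
  show ?thesis
    unfolding jac_induced_def[abs_def] def_induced_def[abs_def] jacobian_algebra_def def_space_def
      cp_add_eq_plus
    using psi_image[OF I] psi_add psi_mult psi_smult psi_one[OF I] jac_compat def_compat
      quotient_map_class[OF refl(1) equiv_jac_rel jac_compat]
      quotient_map_image[OF refl(1) equiv_jac_rel jac_compat psi_image[OF I]]
      quotient_map_class[OF refl(2) equiv_def_rel def_compat]
      quotient_map_image[OF refl(2) equiv_def_rel def_compat psi_image[OF I]]
      jac_fin_dim_restrict[OF I pot] rigid_restrict[OF I pot]
    by (intro conjI allI impI ballI) simp_all
qed

end
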